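(* Let $\Psi$ be a marked $A_3$ simplicial complex satisfying CCCC. (iii.a) If $v,u_1,w,u_2$ is an embedded closed edge path in $\Psi$ with $v$ of type $\hat b$, $u_1,u_2$ of type $\hat c$ and $w$ of type $\hat a$, then $v$ and $w$ are joined by an edge and $\{v,u_1,w\}$ and $\{v,w,u_2\}$ are $2$-simplices of $\Psi$. (iii.b) The same holds with the types $\hat a$ and $\hat c$ interchanged.
   Context: Let $\Delta$ be the spherical triangle with vertices labelled $\hat a,\hat b,\hat c$, with angle $\pi/3$ at $\hat a$ and $\hat c$ and angle $\pi/2$ at $\hat b$. A marked $A_3$ simplicial complex is a homogeneous $2$-dimensional simplicial complex $\Psi$ in which each $2$-simplex $\sigma$ has an isomorphism $m_\sigma:\sigma\to\Delta$ such that $m_\sigma(x)=m_{\sigma'}(x)$ for all $x\in\sigma\cap\sigma'$; a vertex has type $\hat a,\hat b,\hat c$ according to the label of its image under any marking. $\Psi$ satisfies CCCC if: (1) the link of every vertex of type $\hat a$ or $\hat c$ has girth at least $6$; (2) the link of every vertex of type $\hat b$ is a complete bipartite graph containing an embedded $4$-cycle; (3) (i) every embedded closed edge path $w_1,u_1,w_2,u_2$ with $w_1,w_2$ of type $\hat a$ and $u_1,u_2$ of type $\hat c$ is filled by a vertex $v$ of type $\hat b$ such that $\{v,w_1,u_1\},\{v,u_1,w_2\},\{v,w_2,u_2\},\{v,u_2,w_1\}$ are $2$-simplices; (ii.a) every embedded closed edge path of length $6$ alternating between types $\hat a$ and $\hat b$ is filled by a vertex of type $\hat c$ forming a $2$-simplex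 with each of its six edges; (ii.b) the same with $\hat a$ and $\hat c$ interchanged. *)

theory Defs
  imports Main
begin

datatype vtype = TA | TB | TC

text \<open>A homogeneous 2-dimensional simplicial complex is given by its set \<open>T\<close> of
  2-simplices (3-element vertex sets); all other simplices are faces of these.
  A marking (compatible isomorphisms of every 2-simplex to the model triangle
  \<open>\<Delta>\<close>) is the same as a type function on vertices that is a bijection of every
  2-simplex onto the three labels.\<close>
definition marked_A3 :: "'v set set \<Rightarrow> ('v \<Rightarrow> vtype) \<Rightarrow> bool" where
  "marked_A3 T tp \<longleftrightarrow> (\<forall>\<sigma>\<in>T. finite \<sigma> \<and> card \<sigma> = 3 \<and> tp ` \<sigma> = UNIV)"

definition edge :: "'v set set \<Rightarrow> 'v \<Rightarrow> 'v \<Rightarrow> bool" where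
  "edge T x y \<longleftrightarrow> x \<noteq> y \<and> (\<exists>\<sigma>\<in>T. x \<in> \<sigma> \<and> y \<in> \<sigma>)"

definition link_adj :: "'v set set \<Rightarrow> 'v \<Rightarrow> 'v \<Rightarrow> 'v \<Rightarrow> bool" where
  "link_adj T x y z \<longleftrightarrow> y \<noteq> z \<and> {x, y, z} \<in> T"

definition closed_path :: "('v \<Rightarrow> 'v \<Rightarrow> bool) \<Rightarrow> 'v list \<Rightarrow> bool" where
  "closed_path adj xs \<longleftrightarrow> distinct xs \<and> length xs \<ge> 3 \<and>
     (\<forall>i < length xs. adj (xs ! i) (xs ! ((i + 1) mod length xs)))"

definition girth_ge :: "('v \<Rightarrow> 'v \<Rightarrow> bool) \<Rightarrow> nat \<Rightarrow> bool" where
  "girth_ge adj n \<longleftrightarrow> (\<forall>xs. closed_path adj xs \<longrightarrow> length xs \<ge> n)"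

definition complete_bipartite_link :: "'v set set \<Rightarrow> 'v \<Rightarrow> bool" where
  "complete_bipartite_link T x \<longleftrightarrow>
     (\<exists>P Q. P \<inter> Q = {} \<and> P \<union> Q = {y. edge T x y} \<and>
        (\<forall>y z. link_adj T x y z \<longleftrightarrow> (y \<in> P \<and> z \<in> Q \<or> y \<in> Q \<and> z \<in> P)))"

definition CCCC :: "'v set set \<Rightarrow> ('v \<Rightarrow> vtype) \<Rightarrow> bool" where
  "CCCC T tp \<longleftrightarrow>
    \<comment> \<open>(1)\<close>
    (\<forall>x\<in>\<Union>T. tp x \<in> {TA, TC} \<longrightarrow> girth_ge (link_adj T x) 6) \<and>
    \<comment> \<open>(2)\<close>
    (\<forall>x\<in>\<Union>T. tp x = TB \<longrightarrow> complete_bipartite_link T x \<and>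
        (\<exists>xs. closed_path (link_adj T x) xs \<and> length xs = 4)) \<and>
    \<comment> \<open>(3)(i)\<close>
    (\<forall>w1 u1 w2 u2. closed_path (edge T) [w1, u1, w2, u2] \<and>
        tp w1 = TA \<and> tp w2 = TA \<and> tp u1 = TC \<and> tp u2 = TC \<longrightarrow>
        (\<exists>v. tp v = TB \<and> {v, w1, u1} \<in> T \<and> {v, u1, w2} \<in> T \<and>
             {v, w2, u2} \<in> T \<and> {v, u2, w1} \<in> T)) \<and>
    \<comment> \<open>(3)(ii.a)\<close>
    (\<forall>xs. closed_path (edge T) xs \<and> length xs = 6 \<and>
        (\<forall>i<6. tp (xs ! i) \<in> {TA, TB} \<and> tp (xs ! i) \<noteq> tp (xs ! ((i + 1) mod 6))) \<longrightarrow>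
        (\<exists>v. tp v = TC \<and> (\<forall>i<6. {v, xs ! i, xs ! ((i + 1) mod 6)} \<in> T))) \<and>
    \<comment> \<open>(3)(ii.b)\<close>
    (\<forall>xs. closed_path (edge T) xs \<and> length xs = 6 \<and>
        (\<forall>i<6. tp (xs ! i) \<in> {TC, TB} \<and> tp (xs ! i) \<noteq> tp (xs ! ((i + 1) mod 6))) \<longrightarrow>
        (\<exists>v. tp v = TA \<and> (\<forall>i<6. {v, xs ! i, xs ! ((i + 1) mod 6)} \<in> T)))"

end

theory Submission
  imports Defs
begin

text \<open>The edges \<open>v u\<^sub>1\<close> and
  \<open>v u\<^sub>2\<close> lie in triangles with third vertices \<open>a\<^sub>1, a\<^sub>2\<close> of the type of \<open>w\<close>; since the
  link of \<open>v\<close> is complete bipartite and \<open>a\<^sub>1, a\<^sub>2\<close> are not adjacent in it, \<open>a\<^sub>1\<close> is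
  adjacent to \<open>u\<^sub>2\<close> too, so \<open>a := a\<^sub>1\<close> spans triangles with \<open>v u\<^sub>1\<close> and \<open>v u\<^sub>2\<close>.
  If \<open>a \<noteq> w\<close>, the square \<open>w, u\<^sub>1, a, u\<^sub>2\<close> is filled by some \<open>v'\<close> of type \<open>\<hat>b\<close>, and
  \<open>v, u\<^sub>1, v', u\<^sub>2\<close> is a closed path in the link of \<open>a\<close>; as that link has girth at
  least 6, the path degenerates, i.e. \<open>v' = v\<close>, which gives the two triangles at \<open>w\<close>.\<close>

lemma closed_path_4:
  "closed_path adj [a, b, c, d] \<longleftrightarrow>
     distinct [a, b, c, d] \<and> adj a b \<and> adj b c \<and> adj c d \<and> adj d a"
proof -
  have "(\<forall>i<4. Q i) \<longleftrightarrow> Q 0 \<and> Q 1 \<and> Q 2 \<and> Q (3::nat)" for Q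
    by (auto simp: less_Suc_eq eval_nat_numeral)
  moreover have "length [a, b, c, d] = 4"
    by simp
  ultimately show ?thesis
    unfolding closed_path_def by (simp only:) simp
qed

lemma edge_sym: "edge T x y \<Longrightarrow> edge T y x"
  unfolding edge_def by blast

lemma edge_if_simplex: "{x, y, z} \<in> T \<Longrightarrow> x \<noteq> y \<Longrightarrow> edge T x y"
  unfolding edge_def by blast

lemma marked_A3_simplex_types_distinct:
  assumes "marked_A3 T tp" and "{x, y, z} \<in> T"
  shows "tp x \<noteq> tp y" and "tp y \<noteq> tp z" and "tp x \<noteq> tp z"
proof -
  have types: "{tp x, tp y, tp z} = UNIV"
    using assms unfolding marked_A3_def by auto
  have "TA \<in> {tp x, tp y, tp z}" "TB \<in> {tp x, tp y, tp z}" "TC \<in> {tp x, tp y, tp z}"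
    by (simp_all only: types UNIV_I)
  then show "tp x \<noteq> tp y" and "tp y \<noteq> tp z" and "tp x \<noteq> tp z"
    by (cases "tp x"; cases "tp y"; cases "tp z"; auto)+
qed

lemma marked_A3_edge_in_simplex_of_type:
  assumes marked: "marked_A3 T tp" and "edge T x y"
    and "t \<noteq> tp x" and "t \<noteq> tp y"
  shows "\<exists>z. tp z = t \<and> {x, y, z} \<in> T"
proof -
  obtain \<sigma> where \<sigma>: "\<sigma> \<in> T" "x \<in> \<sigma>" "y \<in> \<sigma>" and "x \<noteq> y"
    using \<open>edge T x y\<close> unfolding edge_def by blast
  have "finite \<sigma>" "card \<sigma> = 3" "tp ` \<sigma> = UNIV"
    using marked \<sigma> unfolding marked_A3_def by auto
  then obtain z where z: "z \<in> \<sigma>" "tp z = t"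
    by (metis UNIV_I imageE)
  have "z \<noteq> x" "z \<noteq> y"
    using z assms(3,4) by auto
  with \<open>x \<noteq> y\<close> have "card {x, y, z} = 3"
    by simp
  with \<sigma> z \<open>finite \<sigma>\<close> \<open>card \<sigma> = 3\<close> have "{x, y, z} = \<sigma>"
    by (metis card_subset_eq empty_subsetI insert_subset)
  with \<sigma> z show ?thesis
    by auto
qed

lemma complete_bipartite_link_adj_transfer:
  assumes "complete_bipartite_link T x"
    and "link_adj T x y z" and "link_adj T x y' z'" and "\<not> link_adj T x y y'"
  shows "link_adj T x y z'"
proof -
  obtain P Q where "\<forall>y z. link_adj T x y z \<longleftrightarrow> (y \<in> P \<and> z \<in> Q \<or> y \<in> Q \<and> z \<in> P)"
    using assms(1) unfolding complete_bipartite_link_def by blast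
  with assms(2-4) show ?thesis
    by blast
qed

lemma girth_6_link_square_degenerate:
  assumes "marked_A3 T tp" and "girth_ge (link_adj T a) 6"
    and "{a, p, q} \<in> T" "{a, q, p'} \<in> T" "{a, p', q'} \<in> T" "{a, q', p} \<in> T"
  shows "p = p' \<or> q = q'"
proof (rule ccontr)
  have "p \<noteq> q" "q \<noteq> p'" "p' \<noteq> q'" "q' \<noteq> p"
    using assms(3-6) marked_A3_simplex_types_distinct[OF assms(1)] by metis+
  moreover assume "\<not> (p = p' \<or> q = q')"
  ultimately have "closed_path (link_adj T a) [p, q, p', q']"
    using assms(3-6) unfolding closed_path_4 link_adj_def by auto
  with assms(2) show False
    unfolding girth_ge_def by fastforce
qed

lemma CCCC_link_girth:
  "CCCC T tp \<Longrightarrow> x \<in> \<Union>T \<Longrightarrow> tp x \<noteq> TB \<Longrightarrow> girth_ge (link_adj T x) 6"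
  unfolding CCCC_def by (cases "tp x") auto

lemma CCCC_link_complete_bipartite:
  "CCCC T tp \<Longrightarrow> x \<in> \<Union>T \<Longrightarrow> tp x = TB \<Longrightarrow> complete_bipartite_link T x"
  unfolding CCCC_def by auto

lemma CCCC_square_filled:
  assumes "CCCC T tp" and square: "closed_path (edge T) [w1, u1, w2, u2]"
    and "{tp w1, tp u1} = {TA, TC}" and "tp w2 = tp w1" and "tp u2 = tp u1"
  shows "\<exists>v. tp v = TB \<and> {v, w1, u1} \<in> T \<and> {v, u1, w2} \<in> T \<and> {v, w2, u2} \<in> T \<and> {v, u2, w1} \<in> T"
proof -
  have fill: "\<exists>v. tp v = TB \<and> {v, x1, y1} \<in> T \<and> {v, y1, x2} \<in> T \<and> {v, x2, y2} \<in> T \<and> {v, y2, x1} \<in> T"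
    if "closed_path (edge T) [x1, y1, x2, y2]"
      and "tp x1 = TA" "tp x2 = TA" "tp y1 = TC" "tp y2 = TC" for x1 y1 x2 y2
    using assms(1) that unfolding CCCC_def by blast
  have "tp w1 = TA \<and> tp u1 = TC \<or> tp w1 = TC \<and> tp u1 = TA"
    using assms(3) by (auto simp: doubleton_eq_iff)
  then show ?thesis
  proof
    assume "tp w1 = TA \<and> tp u1 = TC"
    then show ?thesis
      using fill[OF square] assms(4,5) by simp
  next
    assume "tp w1 = TC \<and> tp u1 = TA"
    moreover have "closed_path (edge T) [u1, w2, u2, w1]"
      using square unfolding closed_path_4 by auto
    ultimately show ?thesis
      using fill[of u1 w2 u2 w1] assms(4,5) by auto
  qed
qed

lemma CCCC_link_common_neighbour:
  assumes marked: "marked_A3 T tp" and cccc: "CCCC T tp"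
    and "tp v = TB" and "edge T v u1" "edge T v u2"
    and "tp u1 = \<gamma>" "tp u2 = \<gamma>" and "\<alpha> \<noteq> TB" "\<alpha> \<noteq> \<gamma>"
  shows "\<exists>a. tp a = \<alpha> \<and> {v, u1, a} \<in> T \<and> {v, a, u2} \<in> T"
proof -
  obtain a where "tp a = \<alpha>" and vu1a: "{v, u1, a} \<in> T"
    using marked_A3_edge_in_simplex_of_type[OF marked \<open>edge T v u1\<close>] assms(3,6,8,9)
    by metis
  obtain a' where "tp a' = \<alpha>" and "{v, u2, a'} \<in> T"
    using marked_A3_edge_in_simplex_of_type[OF marked \<open>edge T v u2\<close>] assms(3,7,8,9)
    by metis
  have "v \<in> \<Union>T"
    using vu1a by blast
  then have "complete_bipartite_link T v"
    using CCCC_link_complete_bipartite[OF cccc] \<open>tp v = TB\<close> by blast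
  moreover have "link_adj T v a u1" "link_adj T v a' u2"
    using vu1a \<open>{v, u2, a'} \<in> T\<close> \<open>tp a = \<alpha>\<close> \<open>tp a' = \<alpha>\<close> assms(6,7,9)
    by (auto simp: link_adj_def insert_commute)
  moreover have "\<not> link_adj T v a a'"
    using marked_A3_simplex_types_distinct[OF marked] \<open>tp a = \<alpha>\<close> \<open>tp a' = \<alpha>\<close>
    unfolding link_adj_def by metis
  ultimately have "link_adj T v a u2"
    by (rule complete_bipartite_link_adj_transfer)
  with \<open>tp a = \<alpha>\<close> vu1a show ?thesis
    unfolding link_adj_def by blast
qed

lemma CCCC_square_through_b_vertex:
  assumes marked: "marked_A3 T tp" and cccc: "CCCC T tp"
    and types: "{\<alpha>, \<gamma>} = {TA, TC}"
    and square: "closed_path (edge T) [v, u1, w, u2]"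
    and "tp v = TB" "tp u1 = \<gamma>" "tp u2 = \<gamma>" "tp w = \<alpha>"
  shows "edge T v w \<and> {v, u1, w} \<in> T \<and> {v, w, u2} \<in> T"
proof -
  have "\<alpha> \<noteq> TB" "\<alpha> \<noteq> \<gamma>"
    using types by (auto simp: doubleton_eq_iff)
  have distinct: "distinct [v, u1, w, u2]" and "edge T v u1" "edge T u1 w" "edge T w u2" "edge T u2 v"
    using square unfolding closed_path_4 by auto
  then obtain a where "tp a = \<alpha>" and vu1a: "{v, u1, a} \<in> T" and vau2: "{v, a, u2} \<in> T"
    using CCCC_link_common_neighbour[OF marked cccc] edge_sym assms(5-7) \<open>\<alpha> \<noteq> TB\<close> \<open>\<alpha> \<noteq> \<gamma>\<close>
    by metis
  have "{v, u1, w} \<in> T \<and> {v, w, u2} \<in> T"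
  proof (cases "w = a")
    case True
    with vu1a vau2 show ?thesis
      by simp
  next
    case False
    have "u1 \<noteq> a" "a \<noteq> u2"
      using \<open>tp a = \<alpha>\<close> assms(6,7) \<open>\<alpha> \<noteq> \<gamma>\<close> by auto
    moreover have "{u1, a, v} \<in> T" "{a, u2, v} \<in> T"
      using vu1a vau2 by (simp_all add: insert_commute)
    ultimately have "edge T u1 a" "edge T a u2"
      by (simp_all add: edge_if_simplex)
    with False distinct \<open>edge T u1 w\<close> \<open>edge T w u2\<close> \<open>u1 \<noteq> a\<close> \<open>a \<noteq> u2\<close>
    have "closed_path (edge T) [w, u1, a, u2]"
      unfolding closed_path_4 by (auto intro: edge_sym)
    moreover have "{tp w, tp u1} = {TA, TC}" "tp a = tp w" "tp u2 = tp u1"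
      using types \<open>tp a = \<alpha>\<close> assms(6-8) by simp_all
    ultimately obtain v' where
      v': "{v', w, u1} \<in> T" "{v', u1, a} \<in> T" "{v', a, u2} \<in> T" "{v', u2, w} \<in> T"
      using CCCC_square_filled[OF cccc] by blast
    have "a \<in> \<Union>T"
      using vu1a by blast
    then have "girth_ge (link_adj T a) 6"
      using CCCC_link_girth[OF cccc] \<open>tp a = \<alpha>\<close> \<open>\<alpha> \<noteq> TB\<close> by blast
    then have "v = v' \<or> u1 = u2"
      using girth_6_link_square_degenerate[OF marked, of a v u1 v' u2] vu1a vau2 v'
      by (simp add: insert_commute)
    with distinct have "v' = v"
      by auto
    with v' show ?thesis
      by (simp add: insert_commute)
  qed
  moreover have "v \<noteq> w"
    using distinct by simp
  ultimately show ?thesis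
    using edge_if_simplex[of v w u2 T] by simp
qed

theorem lemma5p6:
  fixes T :: "'v set set" and tp :: "'v \<Rightarrow> vtype"
  assumes "marked_A3 T tp" and "CCCC T tp"
  shows "(\<forall>v u1 w u2. closed_path (edge T) [v, u1, w, u2] \<and>
            tp v = TB \<and> tp u1 = TC \<and> tp u2 = TC \<and> tp w = TA \<longrightarrow>
            edge T v w \<and> {v, u1, w} \<in> T \<and> {v, w, u2} \<in> T) \<and>
         (\<forall>v u1 w u2. closed_path (edge T) [v, u1, w, u2] \<and>
            tp v = TB \<and> tp u1 = TA \<and> tp u2 = TA \<and> tp w = TC \<longrightarrow>
            edge T v w \<and> {v, u1, w} \<in> T \<and> {v, w, u2} \<in> T)"
proof -
  have "{TA, TC} = {TA, TC}" and "{TC, TA} = {TA, TC}"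
    by auto
  then show ?thesis
    using CCCC_square_through_b_vertex[OF assms] by blast
qed

end
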